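(* Let $m$ and $\ell$ be positive integers, let $d=\gcd(m,\ell)$, and let $n$ be an integer with $2\le n\le m$. Then $H(n;\ell,m)=1$ if and only if $H(n;m/d)\le d$. That is: there exist pairwise distinct $x_1,\dots,x_n\in\Omega_m$ with $x_1^{\ell}+\cdots+x_n^{\ell}=0$ if and only if $n\in W(m/d)$ and there exist $y_1,\dots,y_n\in\Omega_{m/d}$ with $y_1+\cdots+y_n=0$ in which each element of $\Omega_{m/d}$ occurs at most $d$ times among $y_1,\dots,y_n$.
   Context: For a positive integer $k$, $\Omega_k$ denotes the set of complex $k$th roots of unity. For positive integers $m,\ell$, $W_\ell(m)$ is the set of positive integers $n$ for which there exist $x_1,\dots,x_n\in\Omega_m$ (repetition allowed) with $x_1^{\ell}+\cdots+x_n^{\ell}=0$; $W(m)=W_1(m)$. For $n\in W_\ell(m)$, the height $H(n;\ell,m)$ is the smallest positive integer $h$ such that there exist $x_1,\dots,x_n\in\Omega_m$ with $x_1^{\ell}+\cdots+x_n^{\ell}=0$ and every value occurs at most $h$ times in the list $x_1,\dots,x_n$ (the maximum multiplicity is $h$). For $n\in W(m)$, $H(n;m)$ denotes $H(n;1,m)$. The statement $H(n;\ell,m)=1$ is understood to include $n\in W_\ell(m)$, and $H(n;m/d)\le d$ to include $n\in W(m/d)$. *)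

theory Defs
  imports "HOL-Analysis.Analysis"
begin

definition Omega :: "nat \<Rightarrow> complex set" where
  "Omega k = {z. z ^ k = 1}"

definition Wl :: "nat \<Rightarrow> nat \<Rightarrow> nat set" where
  "Wl ell m = {n. n > 0 \<and> (\<exists>xs. length xs = n \<and> set xs \<subseteq> Omega m \<and>
                  sum_list (map (\<lambda>x. x ^ ell) xs) = 0)}"

definition W :: "nat \<Rightarrow> nat set" where
  "W m = Wl 1 m"

definition Hl :: "nat \<Rightarrow> nat \<Rightarrow> nat \<Rightarrow> nat" where
  "Hl n ell m = (LEAST h. h > 0 \<and> (\<exists>xs. length xs = n \<and> set xs \<subseteq> Omega m \<and>
                  sum_list (map (\<lambda>x. x ^ ell) xs) = 0 \<and> (\<forall>x. count_list xs x \<le> h)))"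

definition H :: "nat \<Rightarrow> nat \<Rightarrow> nat" where
  "H n m = Hl n 1 m"

end

theory Submission imports Defs begin

text \<open>The map \<open>x \<mapsto> x ^ \<ell>\<close> sends \<open>\<Omega>\<^sub>m\<close> onto \<open>\<Omega>\<^bsub>m/d\<^esub>\<close>, and each fibre is a coset
  \<open>x\<^sub>0 \<Omega>\<^sub>d\<close> with exactly \<open>d\<close> elements. Hence a list of distinct elements of \<open>\<Omega>\<^sub>m\<close> is
  mapped to a list in \<open>\<Omega>\<^bsub>m/d\<^esub>\<close> with all multiplicities at most \<open>d\<close>; conversely such a
  list can be lifted element by element to distinct preimages, since a value occurring
  fewer than \<open>d\<close> times so far still has an unused preimage. Both directions preserve the
  sum of \<open>\<ell>\<close>-th powers, and height \<open>1\<close> is exactly distinctness.\<close>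

lemma distinct_iff_count_list_le_1: "distinct xs \<longleftrightarrow> (\<forall>x. count_list xs x \<le> 1)"
proof (induction xs)
  case (Cons a xs)
  have "(\<forall>x. count_list (a # xs) x \<le> 1) \<longleftrightarrow> count_list xs a = 0 \<and> (\<forall>x. count_list xs x \<le> 1)"
    by (metis count_list.simps(2) add_le_same_cancel2 le_zero_eq add.commute le_add2 order_trans
        le_SucI Suc_eq_plus1 le_refl)
  then show ?case using Cons by (simp add: count_list_0_iff)
qed simp

lemma count_list_map_distinct:
  assumes "distinct xs"
  shows "count_list (map f xs) y = card {x \<in> set xs. f x = y}"
proof -
  have "count_list (map f xs) y = length (filter (\<lambda>x. f x = y) xs)"
    by (induction xs) auto
  also have "\<dots> = card {x \<in> set xs. f x = y}"
    using assms by (simp add: distinct_card[symmetric])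
  finally show ?thesis .
qed

lemma finite_Omega: "m > 0 \<Longrightarrow> finite (Omega m)"
  unfolding Omega_def by (rule finite_roots_unity) simp

lemma card_Omega: "m > 0 \<Longrightarrow> card (Omega m) = m"
  unfolding Omega_def by (rule card_roots_unity_eq)

lemma Omega_nonzero: "m > 0 \<Longrightarrow> x \<in> Omega m \<Longrightarrow> x \<noteq> 0"
  by (auto simp: Omega_def power_0_left)

lemma Omega_subset_Omega: "k dvd m \<Longrightarrow> Omega k \<subseteq> Omega m"
  by (auto simp: Omega_def power_mult elim: dvdE)

lemma Omega_Int_Omega: "Omega m \<inter> Omega ell = Omega (gcd m ell)"
proof (cases "m = 0")
  case False
  show ?thesis
  proof (intro equalityI subsetI)
    fix x :: complex assume "x \<in> Omega m \<inter> Omega ell"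
    then have x: "x ^ m = 1" "x ^ ell = 1" by (auto simp: Omega_def)
    obtain a b where ab: "m * a = ell * b + gcd m ell"
      using bezout_nat[of m ell] False by auto
    have "1 = x ^ (m * a)" using x by (simp add: power_mult)
    also have "\<dots> = x ^ gcd m ell" using x by (simp add: ab power_add power_mult)
    finally show "x \<in> Omega (gcd m ell)" by (simp add: Omega_def)
  qed (auto intro: Omega_subset_Omega[THEN subsetD])
qed (simp add: Omega_def)

lemma Omega_power_fibre:
  assumes "m > 0" "x0 \<in> Omega m"
  shows "{x \<in> Omega m. x ^ ell = x0 ^ ell} = (\<lambda>u. x0 * u) ` Omega (gcd m ell)"
proof -
  have "x0 \<noteq> 0" using Omega_nonzero assms by blast
  have "x \<in> Omega m \<and> x ^ ell = x0 ^ ell \<longleftrightarrow> x / x0 \<in> Omega m \<inter> Omega ell" for x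
    using \<open>x0 \<noteq> 0\<close> assms(2) by (auto simp: Omega_def power_divide)
  then have "{x \<in> Omega m. x ^ ell = x0 ^ ell} = {x. x / x0 \<in> Omega (gcd m ell)}"
    using Omega_Int_Omega by auto
  also have "\<dots> = (\<lambda>u. x0 * u) ` Omega (gcd m ell)"
    using \<open>x0 \<noteq> 0\<close> by (auto simp: image_iff intro!: bexI[of _ "_ / x0"])
  finally show ?thesis .
qed

lemma card_Omega_power_fibre:
  assumes "m > 0" "ell > 0" "x0 \<in> Omega m"
  shows "card {x \<in> Omega m. x ^ ell = x0 ^ ell} = gcd m ell"
proof -
  have "inj_on (\<lambda>u. x0 * u) (Omega (gcd m ell))"
    using Omega_nonzero[OF assms(1,3)] by (auto simp: inj_on_def)
  then show ?thesis
    using Omega_power_fibre[OF assms(1,3)] card_Omega[of "gcd m ell"] assms(2)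
    by (simp add: card_image)
qed

lemma card_Omega_power_fibre_le:
  assumes "m > 0" "ell > 0"
  shows "card {x \<in> Omega m. x ^ ell = y} \<le> gcd m ell"
proof (cases "{x \<in> Omega m. x ^ ell = y} = {}")
  case False
  then obtain x0 where "x0 \<in> Omega m" "y = x0 ^ ell" by blast
  then show ?thesis using card_Omega_power_fibre[OF assms] by simp
next
  case True
  then show ?thesis by (metis card.empty zero_le)
qed

lemma power_image_Omega_subset: "(\<lambda>x. x ^ ell) ` Omega m \<subseteq> Omega (m div gcd m ell)"
proof
  fix y assume "y \<in> (\<lambda>x. x ^ ell) ` Omega m"
  then obtain x where x: "x ^ m = 1" "y = x ^ ell" by (auto simp: Omega_def)
  have "ell * (m div gcd m ell) = m * (ell div gcd m ell)"
    by (simp add: div_mult_swap mult.commute)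
  then have "y ^ (m div gcd m ell) = (x ^ m) ^ (ell div gcd m ell)"
    by (simp add: x(2) flip: power_mult)
  then show "y \<in> Omega (m div gcd m ell)" using x(1) by (simp add: Omega_def)
qed

lemma card_power_image_Omega:
  assumes "m > 0" "ell > 0"
  shows "card ((\<lambda>x. x ^ ell) ` Omega m) = m div gcd m ell"
proof -
  let ?d = "gcd m ell" and ?f = "\<lambda>x::complex. x ^ ell"
  \<comment> \<open>\<open>\<Omega>\<^sub>m\<close> is partitioned into the fibres of \<open>?f\<close>, each of size \<open>d\<close>.\<close>
  have "m = card (Omega m)"
    using card_Omega[OF assms(1)] ..
  also have "\<dots> = (\<Sum>y\<in>?f ` Omega m. card {x \<in> Omega m. ?f x = y})"
    unfolding card_eq_sum by (rule sum.image_gen[OF finite_Omega[OF assms(1)]])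
  also have "\<dots> = (\<Sum>y\<in>?f ` Omega m. ?d)"
  proof (rule sum.cong[OF refl])
    fix y assume "y \<in> ?f ` Omega m"
    then obtain x0 where "x0 \<in> Omega m" "y = x0 ^ ell" by blast
    then show "card {x \<in> Omega m. ?f x = y} = ?d"
      using card_Omega_power_fibre[OF assms] by blast
  qed
  also have "\<dots> = ?d * card (?f ` Omega m)"
    by simp
  finally have "?d * card (?f ` Omega m) = ?d * (m div ?d)"
    by simp
  then show ?thesis using assms by (subst (asm) mult_left_cancel) auto
qed

lemma power_image_Omega:
  assumes "m > 0" "ell > 0"
  shows "(\<lambda>x. x ^ ell) ` Omega m = Omega (m div gcd m ell)"
proof -
  have "m div gcd m ell > 0"
    using assms by (simp add: div_greater_zero_iff gcd_le1_nat)
  then show ?thesis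
    using power_image_Omega_subset card_power_image_Omega[OF assms]
      finite_Omega card_Omega by (intro card_subset_eq) auto
qed

lemma lift_to_distinct_roots:
  assumes "m > 0" "ell > 0" "set ys \<subseteq> Omega (m div gcd m ell)"
    and "\<forall>y. count_list ys y \<le> gcd m ell"
  shows "\<exists>xs. distinct xs \<and> set xs \<subseteq> Omega m \<and> map (\<lambda>x. x ^ ell) xs = ys"
  using assms(3,4)
proof (induction ys)
  case (Cons y ys)
  have "\<forall>z. count_list ys z \<le> gcd m ell"
    using Cons.prems(2) by (metis count_list.simps(2) le_SucI le_trans order_refl Suc_eq_plus1)
  then obtain xs where xs: "distinct xs" "set xs \<subseteq> Omega m" "map (\<lambda>x. x ^ ell) xs = ys"
    using Cons by auto
  let ?F = "{x \<in> Omega m. x ^ ell = y}" and ?U = "{x \<in> set xs. x ^ ell = y}"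
  obtain x0 where x0: "x0 \<in> Omega m" "y = x0 ^ ell"
    using Cons.prems(1) power_image_Omega[OF assms(1,2)] by (metis image_iff list.set_intros(1) subsetD)
  have "card ?U = count_list ys y"
    using count_list_map_distinct[OF xs(1)] xs(3) by metis
  also have "\<dots> < card ?F"
    using Cons.prems(2)[rule_format, of y] card_Omega_power_fibre[OF assms(1,2) x0(1)] x0(2) by simp
  finally have "\<not> ?F \<subseteq> ?U"
    using card_mono[of ?U ?F] by force
  then obtain x where "x \<in> Omega m" "x ^ ell = y" "x \<notin> set xs"
    by blast
  then show ?case using xs by (intro exI[of _ "x # xs"]) auto
qed simp

definition vanishing_sum_height_le :: "nat \<Rightarrow> nat \<Rightarrow> nat \<Rightarrow> nat \<Rightarrow> bool" where
  "vanishing_sum_height_le n ell m h \<longleftrightarrow> (\<exists>xs. length xs = n \<and> set xs \<subseteq> Omega m \<and>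
     sum_list (map (\<lambda>x. x ^ ell) xs) = 0 \<and> (\<forall>x. count_list xs x \<le> h))"

lemma vanishing_sum_height_le_mono:
  "vanishing_sum_height_le n ell m h \<Longrightarrow> h \<le> h' \<Longrightarrow> vanishing_sum_height_le n ell m h'"
  unfolding vanishing_sum_height_le_def by (blast intro: le_trans)

lemma Wl_iff_vanishing_sum_height_le:
  "n > 0 \<Longrightarrow> n \<in> Wl ell m \<longleftrightarrow> vanishing_sum_height_le n ell m n"
  unfolding Wl_def vanishing_sum_height_le_def by (auto intro: count_le_length)

lemma Hl_eq_Least: "Hl n ell m = (LEAST h. h > 0 \<and> vanishing_sum_height_le n ell m h)"
  unfolding Hl_def vanishing_sum_height_le_def ..

lemma Hl_spec:
  assumes "n > 0" "n \<in> Wl ell m"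
  shows "Hl n ell m > 0 \<and> vanishing_sum_height_le n ell m (Hl n ell m)"
  unfolding Hl_eq_Least
  by (rule LeastI[of _ n]) (use assms Wl_iff_vanishing_sum_height_le in blast)

lemma Hl_le_iff:
  assumes "n > 0" "h > 0"
  shows "n \<in> Wl ell m \<and> Hl n ell m \<le> h \<longleftrightarrow> vanishing_sum_height_le n ell m h"
proof
  assume "n \<in> Wl ell m \<and> Hl n ell m \<le> h"
  then show "vanishing_sum_height_le n ell m h"
    using Hl_spec[OF assms(1)] vanishing_sum_height_le_mono by blast
next
  assume *: "vanishing_sum_height_le n ell m h"
  then have "vanishing_sum_height_le n ell m n"
    unfolding vanishing_sum_height_le_def by (auto intro: count_le_length)
  then show "n \<in> Wl ell m \<and> Hl n ell m \<le> h"
    using * assms Wl_iff_vanishing_sum_height_le unfolding Hl_eq_Least by (auto intro: Least_le)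
qed

lemma Hl_eq_1_iff:
  assumes "n > 0"
  shows "n \<in> Wl ell m \<and> Hl n ell m = 1 \<longleftrightarrow> vanishing_sum_height_le n ell m 1"
proof -
  have "n \<in> Wl ell m \<and> Hl n ell m = 1 \<longleftrightarrow> n \<in> Wl ell m \<and> Hl n ell m \<le> 1"
    by (auto dest: Hl_spec[OF assms])
  then show ?thesis using Hl_le_iff[OF assms, of 1] by simp
qed

lemma vanishing_sum_height_1_iff:
  assumes "m > 0" "ell > 0"
  shows "vanishing_sum_height_le n ell m 1 \<longleftrightarrow>
         vanishing_sum_height_le n 1 (m div gcd m ell) (gcd m ell)"
proof
  assume "vanishing_sum_height_le n ell m 1"
  then obtain xs where xs: "length xs = n" "set xs \<subseteq> Omega m" "distinct xs"
      "sum_list (map (\<lambda>x. x ^ ell) xs) = 0"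
    unfolding vanishing_sum_height_le_def distinct_iff_count_list_le_1 by blast
  let ?ys = "map (\<lambda>x. x ^ ell) xs"
  have "set ?ys \<subseteq> Omega (m div gcd m ell)"
    using xs(2) power_image_Omega[OF assms] by auto
  moreover have "count_list ?ys y \<le> gcd m ell" for y
  proof -
    have "count_list ?ys y = card {x \<in> set xs. x ^ ell = y}"
      using count_list_map_distinct[OF xs(3)] .
    also have "\<dots> \<le> card {x \<in> Omega m. x ^ ell = y}"
      using xs(2) finite_Omega[OF assms(1)] by (intro card_mono) auto
    also have "\<dots> \<le> gcd m ell"
      using card_Omega_power_fibre_le[OF assms] .
    finally show ?thesis .
  qed
  ultimately show "vanishing_sum_height_le n 1 (m div gcd m ell) (gcd m ell)"
    unfolding vanishing_sum_height_le_def using xs(1,4) by (intro exI[of _ ?ys]) auto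
next
  assume "vanishing_sum_height_le n 1 (m div gcd m ell) (gcd m ell)"
  then obtain ys where ys: "length ys = n" "set ys \<subseteq> Omega (m div gcd m ell)"
      "sum_list ys = 0" "\<forall>y. count_list ys y \<le> gcd m ell"
    unfolding vanishing_sum_height_le_def by auto
  then obtain xs where "distinct xs" "set xs \<subseteq> Omega m" "map (\<lambda>x. x ^ ell) xs = ys"
    using lift_to_distinct_roots[OF assms] by blast
  with ys show "vanishing_sum_height_le n ell m 1"
    unfolding vanishing_sum_height_le_def distinct_iff_count_list_le_1[symmetric]
    by (intro exI[of _ xs]) auto
qed

theorem theorem3:
  fixes m ell n d :: nat
  assumes "m > 0" and "ell > 0" and "d = gcd m ell" and "2 \<le> n" and "n \<le> m"
  shows "(n \<in> Wl ell m \<and> Hl n ell m = 1) \<longleftrightarrow> (n \<in> W (m div d) \<and> H n (m div d) \<le> d)"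
proof -
  have "n > 0" "d > 0" using assms by auto
  have "(n \<in> Wl ell m \<and> Hl n ell m = 1) \<longleftrightarrow> vanishing_sum_height_le n ell m 1"
    using Hl_eq_1_iff[OF \<open>n > 0\<close>] .
  also have "\<dots> \<longleftrightarrow> vanishing_sum_height_le n 1 (m div d) d"
    using vanishing_sum_height_1_iff[OF assms(1,2)] assms(3) by simp
  also have "\<dots> \<longleftrightarrow> (n \<in> W (m div d) \<and> H n (m div d) \<le> d)"
    using Hl_le_iff[OF \<open>n > 0\<close> \<open>d > 0\<close>] unfolding W_def H_def by simp
  finally show ?thesis .
qed

end
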